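(* Let $k$ be a field and $S=k[x_1,\dots,x_n]$. (1) Let $I\subseteq K\subseteq S$ and $J\subseteq L\subseteq S$ be monomial ideals with $\dim_k S/I<\infty$, $\dim_k S/J<\infty$, and let $\phi\colon K/I\to L/J$ be an $S$-module isomorphism sending monomials to monomials. Let $\lambda$ (resp. $\mu$) be the $n$-dimensional Young diagram corresponding to $I$ (resp. $J$). Then there exist connected abstract skew shapes $\nu_1,\dots,\nu_r$ and lattice points $b_1,\dots,b_r,c_1,\dots,c_r\in\mathbb{Z}^n$ such that $\nu_1+b_1,\dots,\nu_r+b_r$ are exactly the connected components of the skew shape associated with $K/I$, $\nu_1+c_1,\dots,\nu_r+c_r$ are exactly the connected components of the skew shape associated with $L/J$, $\phi(x^{v+b_i})=x^{v+c_i}$ for all $i$ and $v\in\nu_i$, and the following hold: (a) $\nu_1+b_1,\dots,\nu_r+b_r$ are pairwise disjoint and contained in $\lambda$; (b) for all $w\in\mathbb{N}^n$ and all $v_i\in\nu_i$ with $v_i+b_i+w\in\lambda$, we have $v_i+w\in\nu_i$; (c) $\nu_1+c_1,\dots,\nu_r+c_r$ are pairwise disjoint and contained in $\mu$; (d) for all $w\in\mathbb{N}^n$ and all $v_i\in\nu_i$ with $v_i+c_i+w\in\mu$, we have $v_i+w\in\nu_i$. (2) Conversely, given $n$-dimensional Young diagrams $\lambda,\mu$, connected abstract skew shapes $\nu_1,\dots,\nu_r$ and lattice points $b_1,\dots,b_r,c_1,\dots,c_r\in\mathbb{Z}^n$ satisfying (a)–(d), there exist monomial ideals $I\subseteq K$,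 $J\subseteq L$ of $S$ with $\dim_k S/I,\dim_k S/J<\infty$ and an $S$-module isomorphism $\phi\colon K/I\to L/J$ sending monomials to monomials, such that $\lambda$ (resp. $\mu$) is the Young diagram corresponding to $I$ (resp. $J$), the connected components of the skew shape of $K/I$ (resp. $L/J$) are the $\nu_i+b_i$ (resp. $\nu_i+c_i$), and $\phi(x^{v+b_i})=x^{v+c_i}$ for all $i$ and $v\in\nu_i$.
   Context: Monomials $x^a=x_1^{a_1}\cdots x_n^{a_n}$ are identified with $a\in\mathbb{N}^n$, which carries the componentwise partial order. An $n$-dimensional Young diagram is a finite subset $\lambda\subseteq\mathbb{N}^n$ such that $w\in\lambda$ and $v\le w$ imply $v\in\lambda$; the Young diagram corresponding to a monomial ideal $I$ with $\dim_k S/I<\infty$ is $\{a\in\mathbb{N}^n : x^a\notin I\}$. The skew shape associated with $K/I$ (for monomial ideals $I\subseteq K$) is $\{a : x^a\in K,\ x^a\notin I\}$; a skew shape is a difference $\lambda\setminus\lambda'$ of two Young diagrams. A set $\epsilon$ is connected if for any $a,b\in\epsilon$ there exist $a',b'\in\mathbb{N}^n$ with $a+a'=b+b'\in\epsilon$; every skew shape decomposes uniquely as a disjoint union of connected ones (its connected components). Each skew shape $\nu$ has a unique lexicographically smallest point $\ell_\nu$; an abstract skew shape is a set of the form $\nu-\ell_\nu\subseteq\mathbb{Z}^n$ for a skew shape $\nu$, and it is connected if $\nu$ is. An isomorphism $\phi\colon K/I\to L/J$ sends monomials to monomials if it maps the class of each monomial of $K$ not in $I$ to the class of a monomial of $L$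 not in $J$. *)

theory Defs
  imports Main
begin

text \<open>Lattice points of Z^n are functions nat => int vanishing outside {..<n};
  N^n is the subset of nonnegative ones. Monomial x^a is identified with a.\<close>

type_synonym pt = "nat \<Rightarrow> int"

definition Zn :: "nat \<Rightarrow> pt set" where
  "Zn n = {a. \<forall>i\<ge>n. a i = 0}"

definition Nn :: "nat \<Rightarrow> pt set" where
  "Nn n = {a \<in> Zn n. \<forall>i. 0 \<le> a i}"

definition vadd :: "pt \<Rightarrow> pt \<Rightarrow> pt" where
  "vadd a b = (\<lambda>i. a i + b i)"

definition vsub :: "pt \<Rightarrow> pt \<Rightarrow> pt" where
  "vsub a b = (\<lambda>i. a i - b i)"

definition vneg :: "pt \<Rightarrow> pt" where
  "vneg a = (\<lambda>i. - a i)"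

definition vle :: "pt \<Rightarrow> pt \<Rightarrow> bool" where
  "vle a b = (\<forall>i. a i \<le> b i)"

definition translate :: "pt set \<Rightarrow> pt \<Rightarrow> pt set" where
  "translate A b = (\<lambda>v. vadd v b) ` A"

text \<open>A monomial ideal is identified with the set of exponents of the monomials it contains
  (an up-closed subset of N^n).\<close>
definition monomial_ideal :: "nat \<Rightarrow> pt set \<Rightarrow> bool" where
  "monomial_ideal n I = (I \<subseteq> Nn n \<and> (\<forall>a\<in>I. \<forall>w\<in>Nn n. vadd a w \<in> I))"

definition young :: "nat \<Rightarrow> pt set \<Rightarrow> bool" where
  "young n lam = (finite lam \<and> lam \<subseteq> Nn n \<and> (\<forall>w\<in>lam. \<forall>v\<in>Nn n. vle v w \<longrightarrow> v \<in> lam))"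

text \<open>Young diagram corresponding to I: exponents of monomials not in I
  (finite iff dim_k S/I is finite).\<close>
definition young_of :: "nat \<Rightarrow> pt set \<Rightarrow> pt set" where
  "young_of n I = Nn n - I"

definition skew_of :: "pt set \<Rightarrow> pt set \<Rightarrow> pt set" where
  "skew_of K I = K - I"

definition skew_shape :: "nat \<Rightarrow> pt set \<Rightarrow> bool" where
  "skew_shape n nu = (\<exists>l1 l2. young n l1 \<and> young n l2 \<and> nu = l1 - l2)"

definition linked :: "nat \<Rightarrow> pt set \<Rightarrow> pt \<Rightarrow> pt \<Rightarrow> bool" where
  "linked n E a b = (\<exists>a'\<in>Nn n. \<exists>b'\<in>Nn n. vadd a a' = vadd b b' \<and> vadd a a' \<in> E)"

definition link_rel :: "nat \<Rightarrow> pt set \<Rightarrow> (pt \<times> pt) set" where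
  "link_rel n E = {(a, b). a \<in> E \<and> b \<in> E \<and> linked n E a b}"

definition connected_set :: "nat \<Rightarrow> pt set \<Rightarrow> bool" where
  "connected_set n E = (E \<noteq> {} \<and> E \<times> E \<subseteq> (link_rel n E)\<^sup>*)"

definition components :: "nat \<Rightarrow> pt set \<Rightarrow> pt set set" where
  "components n E = {(link_rel n E)\<^sup>* `` {a} | a. a \<in> E}"

definition lex_less :: "pt \<Rightarrow> pt \<Rightarrow> bool" where
  "lex_less a b = (\<exists>j. a j < b j \<and> (\<forall>i<j. a i = b i))"

definition lexmin :: "pt set \<Rightarrow> pt" where
  "lexmin E = (THE l. l \<in> E \<and> (\<forall>a\<in>E. a \<noteq> l \<longrightarrow> lex_less l a))"

definition abstract_skew_shape :: "nat \<Rightarrow> pt set \<Rightarrow> bool" where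
  "abstract_skew_shape n A =
     (\<exists>nu. skew_shape n nu \<and> nu \<noteq> {} \<and> A = translate nu (vneg (lexmin nu)))"

definition connected_abstract_skew_shape :: "nat \<Rightarrow> pt set \<Rightarrow> bool" where
  "connected_abstract_skew_shape n A =
     (\<exists>nu. skew_shape n nu \<and> connected_set n nu \<and> A = translate nu (vneg (lexmin nu)))"

text \<open>The S-module K/I (E = skew shape of K/I) is modelled via its k-basis of monomial
  classes: elements are coefficient functions supported on E; x^w acts by shifting,
  killing terms leaving E (they land in I).\<close>
definition qcarrier :: "pt set \<Rightarrow> (pt \<Rightarrow> 'k::field) set" where
  "qcarrier E = {f. \<forall>a. a \<notin> E \<longrightarrow> f a = 0}"

definition mact :: "pt set \<Rightarrow> pt \<Rightarrow> (pt \<Rightarrow> 'k::field) \<Rightarrow> (pt \<Rightarrow> 'k)" where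
  "mact E w f = (\<lambda>a. if a \<in> E \<and> vsub a w \<in> E then f (vsub a w) else 0)"

definition mon :: "pt \<Rightarrow> (pt \<Rightarrow> 'k::field)" where
  "mon a = (\<lambda>b. if b = a then 1 else 0)"

definition module_iso ::
  "nat \<Rightarrow> pt set \<Rightarrow> pt set \<Rightarrow> ((pt \<Rightarrow> 'k::field) \<Rightarrow> (pt \<Rightarrow> 'k)) \<Rightarrow> bool" where
  "module_iso n E F phi =
     (bij_betw phi (qcarrier E) (qcarrier F) \<and>
      (\<forall>f\<in>qcarrier E. \<forall>g\<in>qcarrier E. phi (\<lambda>a. f a + g a) = (\<lambda>a. phi f a + phi g a)) \<and>
      (\<forall>c. \<forall>f\<in>qcarrier E. phi (\<lambda>a. c * f a) = (\<lambda>a. c * phi f a)) \<and>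
      (\<forall>w\<in>Nn n. \<forall>f\<in>qcarrier E. phi (mact E w f) = mact F w (phi f)))"

definition sends_monomials ::
  "pt set \<Rightarrow> pt set \<Rightarrow> ((pt \<Rightarrow> 'k::field) \<Rightarrow> (pt \<Rightarrow> 'k)) \<Rightarrow> bool" where
  "sends_monomials E F phi = (\<forall>a\<in>E. \<exists>a'\<in>F. phi (mon a) = mon a')"

definition conds_abcd ::
  "nat \<Rightarrow> pt set \<Rightarrow> pt set \<Rightarrow> nat \<Rightarrow> (nat \<Rightarrow> pt set) \<Rightarrow> (nat \<Rightarrow> pt) \<Rightarrow> (nat \<Rightarrow> pt) \<Rightarrow> bool" where
  "conds_abcd n lam mu r nu b c =
    ((\<forall>i<r. \<forall>j<r. i \<noteq> j \<longrightarrow> translate (nu i) (b i) \<inter> translate (nu j) (b j) = {}) \<and>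
     (\<forall>i<r. translate (nu i) (b i) \<subseteq> lam) \<and>
     (\<forall>i<r. \<forall>w\<in>Nn n. \<forall>v\<in>nu i. vadd (vadd v (b i)) w \<in> lam \<longrightarrow> vadd v w \<in> nu i) \<and>
     (\<forall>i<r. \<forall>j<r. i \<noteq> j \<longrightarrow> translate (nu i) (c i) \<inter> translate (nu j) (c j) = {}) \<and>
     (\<forall>i<r. translate (nu i) (c i) \<subseteq> mu) \<and>
     (\<forall>i<r. \<forall>w\<in>Nn n. \<forall>v\<in>nu i. vadd (vadd v (c i)) w \<in> mu \<longrightarrow> vadd v w \<in> nu i))"

end

theory Submission
  imports Defs
begin

text \<open>A monomial-preserving isomorphism \<open>phi\<close> induces a bijection \<open>sigma\<close> from the skew shape
  \<open>E\<close> of \<open>K/I\<close> onto the skew shape \<open>F\<close> of \<open>L/J\<close> with \<open>phi(x^a) = x^(sigma a)\<close>. Since \<open>phi\<close>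
  commutes with multiplication by \<open>x^w\<close>, we have \<open>a + w \<in> E\<close> iff \<open>sigma a + w \<in> F\<close>, and then
  \<open>sigma (a + w) = sigma a + w\<close>. Hence \<open>sigma\<close> preserves the linking relation and \<open>sigma a - a\<close> is
  constant on each connected component: \<open>sigma\<close> translates the components of \<open>E\<close> onto those of
  \<open>F\<close>. Conditions (b) and (d) hold because a component of \<open>K/I\<close> is closed upwards inside the
  Young diagram of \<open>I\<close>, \<open>K\<close> being an ideal.

  Conversely, given (a)-(d), put \<open>I = N^n - lam\<close> and \<open>K = I \<union> \<Union>i (nu i + b i)\<close>, and similarly
  \<open>J\<close>, \<open>L\<close>. Condition (b) makes \<open>K\<close> an ideal, (a) and (b) make the \<open>nu i + b i\<close> the
  components of \<open>K/I\<close>, and moving each \<open>nu i + b i\<close> onto \<open>nu i + c i\<close> is an isomorphism.\<close>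

lemma vadd_assoc: "vadd (vadd a b) c = vadd a (vadd b c)"
  by (simp add: vadd_def add.assoc)

lemma vadd_right_commute: "vadd (vadd a b) c = vadd (vadd a c) b"
  by (simp add: vadd_def algebra_simps)

lemma vsub_vadd_cancel [simp]: "vsub (vadd a b) b = a"
  by (simp add: vadd_def vsub_def)

lemma vadd_vsub_cancel [simp]: "vadd (vsub a b) b = a"
  by (simp add: vadd_def vsub_def)

lemma vadd_vsub_eq: "vadd a (vsub b a) = b"
  by (simp add: vadd_def vsub_def)

lemma vsub_eq_iff: "vsub a b = c \<longleftrightarrow> a = vadd c b"
  by auto

lemma vsub_vadd_vadd: "vsub (vadd a c) (vadd b c) = vsub a b"
  by (simp add: vadd_def vsub_def)

lemma vsub_vadd_commute: "vsub (vadd a c) b = vadd (vsub a b) c"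
  by (simp add: vadd_def vsub_def algebra_simps)

lemma vneg_vadd: "vadd (vneg a) b = vsub b a"
  by (simp add: vadd_def vsub_def vneg_def)

lemma vadd_zero [simp]: "vadd a (\<lambda>_. 0) = a"
  by (simp add: vadd_def)

lemma zero_in_Nn: "(\<lambda>_. 0) \<in> Nn n"
  by (simp add: Nn_def Zn_def)

lemma Nn_subset_Zn: "Nn n \<subseteq> Zn n"
  by (auto simp: Nn_def)

lemma vadd_in_Nn: "a \<in> Nn n \<Longrightarrow> b \<in> Nn n \<Longrightarrow> vadd a b \<in> Nn n"
  by (simp add: Nn_def Zn_def vadd_def)

lemma vsub_in_Nn: "vle a b \<Longrightarrow> a \<in> Nn n \<Longrightarrow> b \<in> Nn n \<Longrightarrow> vsub b a \<in> Nn n"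
  by (simp add: Nn_def Zn_def vsub_def vle_def)

lemma vle_vadd: "w \<in> Nn n \<Longrightarrow> vle a (vadd a w)"
  by (simp add: Nn_def vle_def vadd_def)

lemma vle_refl: "vle a a"
  by (simp add: vle_def)

lemma vle_trans: "vle a b \<Longrightarrow> vle b c \<Longrightarrow> vle a c"
  unfolding vle_def by (meson order_trans)

lemma mem_translate: "x \<in> translate A t \<longleftrightarrow> vsub x t \<in> A"
  unfolding translate_def by (auto simp: image_iff) (metis vadd_vsub_cancel)

lemma vadd_mem_translate_iff [simp]: "vadd x t \<in> translate A t \<longleftrightarrow> x \<in> A"
  by (simp add: mem_translate)

lemma translate_translate: "translate (translate A s) t = translate A (vadd s t)"
  unfolding translate_def image_image by (simp add: vadd_assoc)

lemma translate_vneg_cancel [simp]: "translate (translate A (vneg t)) t = A"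
  unfolding mem_translate set_eq_iff by (simp add: vsub_def vneg_def)

lemma lex_less_linear: "a \<noteq> b \<Longrightarrow> lex_less a b \<or> lex_less b a"
proof -
  assume "a \<noteq> b"
  then obtain k where "a k \<noteq> b k" by (auto simp: fun_eq_iff)
  define j where "j = (LEAST j. a j \<noteq> b j)"
  have "a j \<noteq> b j" unfolding j_def by (rule LeastI) fact
  moreover have "\<forall>i<j. a i = b i" unfolding j_def using not_less_Least by blast
  ultimately show ?thesis
    unfolding lex_less_def by (cases "a j < b j") (auto intro!: exI[of _ j])
qed

lemma lex_less_asym: assumes "lex_less a b" shows "\<not> lex_less b a"
proof
  assume "lex_less b a"
  then obtain j k where h: "a j < b j" "\<forall>i<j. a i = b i" "b k < a k" "\<forall>i<k. b i = a i"
    using assms unfolding lex_less_def by blast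
  show False
  proof (cases j k rule: linorder_cases)
    case less
    then show ?thesis using h(1,4) by fastforce
  next
    case equal
    then show ?thesis using h(1,3) by simp
  next
    case greater
    then show ?thesis using h(2,3) by fastforce
  qed
qed

lemma lex_less_trans: assumes "lex_less a b" "lex_less b c" shows "lex_less a c"
proof -
  obtain j k where h: "a j < b j" "\<forall>i<j. a i = b i" "b k < c k" "\<forall>i<k. b i = c i"
    using assms unfolding lex_less_def by blast
  have "a (min j k) < c (min j k) \<and> (\<forall>i<min j k. a i = c i)"
    using h by (cases j k rule: linorder_cases) auto
  then show ?thesis unfolding lex_less_def by blast
qed

lemma ex_lex_least: "finite E \<Longrightarrow> E \<noteq> {} \<Longrightarrow> \<exists>l\<in>E. \<forall>a\<in>E. a \<noteq> l \<longrightarrow> lex_less l a"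
proof (induction E rule: finite_ne_induct)
  case (singleton x)
  then show ?case by blast
next
  case (insert x F)
  then obtain m where m: "m \<in> F" "\<forall>a\<in>F. a \<noteq> m \<longrightarrow> lex_less m a" by blast
  show ?case
  proof (cases "lex_less x m")
    case True
    have "lex_less x a" if "a \<in> F" for a
    proof (cases "a = m")
      case False
      then show ?thesis using lex_less_trans[OF True] m(2) that by blast
    qed (use True in simp)
    then show ?thesis by blast
  next
    case False
    have "x \<noteq> m" using m(1) insert.hyps by blast
    then have "lex_less m x" using lex_less_linear False by blast
    then show ?thesis using m by blast
  qed
qed

lemma lexmin_in: assumes "finite E" "E \<noteq> {}" shows "lexmin E \<in> E"
proof -
  obtain l where l: "l \<in> E" "\<forall>a\<in>E. a \<noteq> l \<longrightarrow> lex_less l a"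
    using ex_lex_least assms by blast
  have "lexmin E = l" unfolding lexmin_def
  proof (rule the_equality)
    fix l' assume l': "l' \<in> E \<and> (\<forall>a\<in>E. a \<noteq> l' \<longrightarrow> lex_less l' a)"
    show "l' = l"
    proof (rule ccontr)
      assume "l' \<noteq> l"
      then have "lex_less l' l" "lex_less l l'" using l l' by auto
      then show False using lex_less_asym by blast
    qed
  qed (use l in blast)
  then show ?thesis using l by simp
qed

section \<open>Connected components\<close>

lemma linked_sym: "linked n E a b \<Longrightarrow> linked n E b a"
  unfolding linked_def by metis

lemma equiv_link_rel_rtrancl: "equiv UNIV ((link_rel n E)\<^sup>*)"
proof -
  have "sym (link_rel n E)"
    unfolding sym_def link_rel_def using linked_sym by blast
  then show ?thesis
    by (simp add: equiv_def refl_rtrancl sym_rtrancl trans_rtrancl)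
qed

lemma link_rel_subset: "link_rel n E \<subseteq> E \<times> E"
  unfolding link_rel_def by blast

lemma link_rel_mono: "A \<subseteq> B \<Longrightarrow> link_rel n A \<subseteq> link_rel n B"
  unfolding link_rel_def linked_def by blast

lemma link_rel_vadd:
  assumes "a \<in> E" "w \<in> Nn n" "vadd a w \<in> E" shows "(a, vadd a w) \<in> link_rel n E"
proof -
  have "vadd a w = vadd (vadd a w) (\<lambda>_. 0)" by simp
  then show ?thesis using assms zero_in_Nn unfolding link_rel_def linked_def by blast
qed

lemma rtrancl_link_rel_mem: "(a, b) \<in> (link_rel n E)\<^sup>* \<Longrightarrow> a \<in> E \<Longrightarrow> b \<in> E"
  by (induction rule: rtrancl_induct) (use link_rel_subset in blast)+

lemma components_subset: "C \<in> components n E \<Longrightarrow> C \<subseteq> E"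
  unfolding components_def using rtrancl_link_rel_mem by fastforce

lemma component_eq_class: "C \<in> components n E \<Longrightarrow> x \<in> C \<Longrightarrow> C = (link_rel n E)\<^sup>* `` {x}"
  unfolding components_def using equiv_class_eq[OF equiv_link_rel_rtrancl] by blast

lemma class_in_components: "a \<in> E \<Longrightarrow> (link_rel n E)\<^sup>* `` {a} \<in> components n E"
  unfolding components_def by blast

lemma components_nonempty: "C \<in> components n E \<Longrightarrow> C \<noteq> {}"
  unfolding components_def by blast

lemma components_disjoint:
  "C \<in> components n E \<Longrightarrow> C' \<in> components n E \<Longrightarrow> C \<noteq> C' \<Longrightarrow> C \<inter> C' = {}"
  using component_eq_class by blast

lemma finite_components: "finite E \<Longrightarrow> finite (components n E)"
  by (rule finite_subset[of _ "Pow E"]) (auto dest: components_subset)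

lemma lexmin_component: "finite E \<Longrightarrow> C \<in> components n E \<Longrightarrow> lexmin C \<in> C"
  using lexmin_in components_subset components_nonempty finite_subset by metis

lemma link_rel_component:
  assumes C: "C \<in> components n E" and p: "p \<in> C" and pq: "(p, q) \<in> link_rel n E"
  shows "(p, q) \<in> link_rel n C"
proof -
  have C_eq: "C = (link_rel n E)\<^sup>* `` {p}" using component_eq_class C p by blast
  obtain a' b' where ab: "a' \<in> Nn n" "b' \<in> Nn n" "vadd p a' = vadd q b'" "vadd p a' \<in> E"
    using pq unfolding link_rel_def linked_def by blast
  have "(p, vadd p a') \<in> link_rel n E" using link_rel_vadd pq ab link_rel_subset by blast
  then have "vadd p a' \<in> C" using C_eq by auto
  moreover have "q \<in> C" using C_eq pq by auto
  ultimately show ?thesis using ab p unfolding link_rel_def linked_def by blast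
qed

lemma component_connected: assumes C: "C \<in> components n E" shows "connected_set n C"
proof -
  have "(p, q) \<in> (link_rel n C)\<^sup>*" if "(p, q) \<in> (link_rel n E)\<^sup>*" "p \<in> C" for p q
    using that
  proof (induction rule: rtrancl_induct)
    case (step y z)
    then have "y \<in> C" using rtrancl_link_rel_mem[of p y n C] link_rel_subset by blast
    then have "(y, z) \<in> link_rel n C" using link_rel_component[OF C] step.hyps(2) by blast
    then show ?case using step by (blast intro: rtrancl_into_rtrancl)
  qed simp
  moreover have "(p, q) \<in> (link_rel n E)\<^sup>*" if "p \<in> C" "q \<in> C" for p q
    using component_eq_class[OF C that(1)] that(2) by blast
  ultimately show ?thesis
    unfolding connected_set_def using components_nonempty[OF C] by blast
qed

lemma components_of_separated_union:
  assumes E: "E = (\<Union>i<r. C i)" and conn: "\<And>i. i < r \<Longrightarrow> connected_set n (C i)"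
    and sep: "\<And>i p q. i < r \<Longrightarrow> p \<in> C i \<Longrightarrow> (p, q) \<in> link_rel n E \<Longrightarrow> q \<in> C i"
  shows "components n E = {C i | i. i < r}"
proof -
  have class_eq: "(link_rel n E)\<^sup>* `` {p} = C i" if i: "i < r" and p: "p \<in> C i" for i p
  proof
    show "(link_rel n E)\<^sup>* `` {p} \<subseteq> C i"
    proof
      fix q assume "q \<in> (link_rel n E)\<^sup>* `` {p}"
      then have "(p, q) \<in> (link_rel n E)\<^sup>*" by blast
      then show "q \<in> C i" by (induction rule: rtrancl_induct) (use p sep[OF i] in blast)+
    qed
    have "link_rel n (C i) \<subseteq> link_rel n E" using E i by (intro link_rel_mono) blast
    then have "(link_rel n (C i))\<^sup>* \<subseteq> (link_rel n E)\<^sup>*" by (rule rtrancl_mono)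
    then show "C i \<subseteq> (link_rel n E)\<^sup>* `` {p}"
      using conn[OF i] p unfolding connected_set_def by blast
  qed
  show ?thesis
  proof
    show "components n E \<subseteq> {C i | i. i < r}"
      unfolding components_def using E class_eq by blast
    show "{C i | i. i < r} \<subseteq> components n E"
    proof clarify
      fix i assume i: "i < r"
      then obtain p where "p \<in> C i" using conn unfolding connected_set_def by blast
      then show "C i \<in> components n E"
        using class_eq[OF i] E i class_in_components[of p E n] by auto
    qed
  qed
qed

lemma linked_translate:
  assumes "linked n A p q" shows "linked n (translate A t) (vadd p t) (vadd q t)"
proof -
  obtain a' b' where "a' \<in> Nn n" "b' \<in> Nn n" "vadd p a' = vadd q b'" "vadd p a' \<in> A"
    using assms unfolding linked_def by blast
  moreover have "vadd (vadd p t) a' = vadd (vadd p a') t" "vadd (vadd q t) b' = vadd (vadd q b') t"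
    by (simp_all add: vadd_right_commute)
  ultimately show ?thesis unfolding linked_def by (metis vadd_mem_translate_iff)
qed

lemma connected_set_translate:
  assumes "connected_set n A" shows "connected_set n (translate A t)"
proof -
  have step: "(vadd p t, vadd q t) \<in> link_rel n (translate A t)" if "(p, q) \<in> link_rel n A" for p q
    using that linked_translate unfolding link_rel_def by auto
  have "(vadd p t, vadd q t) \<in> (link_rel n (translate A t))\<^sup>*" if "(p, q) \<in> (link_rel n A)\<^sup>*" for p q
    using that by (induction rule: rtrancl_induct) (auto intro: rtrancl_into_rtrancl step)
  then show ?thesis
    using assms unfolding connected_set_def translate_def by blast
qed

section \<open>Components of a monomial quotient\<close>

lemma young_of_down_closed:
  assumes I: "monomial_ideal n I" and x: "x \<in> young_of n I" and y: "y \<in> Nn n" "vle y x"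
  shows "y \<in> young_of n I"
proof -
  have "vsub x y \<in> Nn n" using vsub_in_Nn y x by (auto simp: young_of_def)
  then have "y \<in> I \<Longrightarrow> x \<in> I" using I vadd_vsub_eq[of y x] unfolding monomial_ideal_def by metis
  then show ?thesis using x y by (auto simp: young_of_def)
qed

lemma young_young_of: "monomial_ideal n I \<Longrightarrow> finite (young_of n I) \<Longrightarrow> young n (young_of n I)"
  unfolding young_def using young_of_down_closed by (auto simp: young_of_def)

lemma skew_of_subset_Nn: "monomial_ideal n K \<Longrightarrow> skew_of K I \<subseteq> Nn n"
  unfolding skew_of_def monomial_ideal_def by blast

lemma skew_of_subset_young_of: "monomial_ideal n K \<Longrightarrow> skew_of K I \<subseteq> young_of n I"
  unfolding skew_of_def young_of_def monomial_ideal_def by blast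

lemma component_upward_closed:
  assumes K: "monomial_ideal n K" and C: "C \<in> components n (skew_of K I)"
    and x: "x \<in> C" and w: "w \<in> Nn n" and xw: "vadd x w \<in> young_of n I"
  shows "vadd x w \<in> C"
proof -
  have xE: "x \<in> skew_of K I" using components_subset[OF C] x by blast
  then have "vadd x w \<in> skew_of K I"
    using K w xw unfolding monomial_ideal_def skew_of_def young_of_def by blast
  then have "(x, vadd x w) \<in> link_rel n (skew_of K I)" using link_rel_vadd xE w by blast
  then show ?thesis using component_eq_class[OF C x] by blast
qed

definition downset :: "nat \<Rightarrow> pt set \<Rightarrow> pt set" where
  "downset n C = {y \<in> Nn n. \<exists>z\<in>C. vle y z}"

lemma downset_subset: "young n Y \<Longrightarrow> C \<subseteq> Y \<Longrightarrow> downset n C \<subseteq> Y"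
  unfolding young_def downset_def by blast

lemma young_downset:
  assumes Y: "young n Y" and CY: "C \<subseteq> Y" shows "young n (downset n C)"
  unfolding young_def
proof (intro conjI ballI impI)
  show "finite (downset n C)" using Y CY downset_subset finite_subset unfolding young_def by metis
  show "downset n C \<subseteq> Nn n" unfolding downset_def by blast
  fix w v assume "w \<in> downset n C" "v \<in> Nn n" "vle v w"
  then show "v \<in> downset n C" unfolding downset_def using vle_trans by blast
qed

text \<open>The two Young diagrams are the downset of \<open>C\<close> and the downset minus \<open>C\<close>.\<close>
lemma skew_shape_if_upward_closed:
  assumes Y: "young n Y" and CY: "C \<subseteq> Y" and up: "\<And>x y. x \<in> C \<Longrightarrow> y \<in> Y \<Longrightarrow> vle x y \<Longrightarrow> y \<in> C"
  shows "skew_shape n C"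
proof -
  let ?D = "downset n C"
  have D: "young n ?D" using young_downset[OF Y CY] .
  have "young n (?D - C)"
    unfolding young_def
  proof (intro conjI ballI impI)
    show "finite (?D - C)" "?D - C \<subseteq> Nn n" using D unfolding young_def by auto
    fix x y assume x: "x \<in> ?D - C" and y: "y \<in> Nn n" "vle y x"
    have "y \<in> ?D" using D x y unfolding young_def by blast
    moreover have "y \<notin> C" using up[of y x] x y downset_subset[OF Y CY] by blast
    ultimately show "y \<in> ?D - C" by blast
  qed
  moreover have "C \<subseteq> ?D" using CY Y vle_refl unfolding young_def downset_def by blast
  then have "C = ?D - (?D - C)" by blast
  ultimately show ?thesis unfolding skew_shape_def using D by blast
qed

lemma component_skew_shape:
  assumes I: "monomial_ideal n I" and K: "monomial_ideal n K" and fin: "finite (young_of n I)"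
    and C: "C \<in> components n (skew_of K I)"
  shows "skew_shape n C"
proof (rule skew_shape_if_upward_closed[OF young_young_of[OF I fin]])
  show CY: "C \<subseteq> young_of n I" using components_subset[OF C] skew_of_subset_young_of[OF K] by blast
  fix x y assume x: "x \<in> C" and y: "y \<in> young_of n I" "vle x y"
  have "vsub y x \<in> Nn n" using vsub_in_Nn y x CY by (auto simp: young_of_def)
  then show "y \<in> C"
    using component_upward_closed[OF K C x] y vadd_vsub_eq[of x y] by metis
qed

lemma component_abstract_skew_shape:
  assumes "monomial_ideal n I" "monomial_ideal n K" "finite (young_of n I)"
    and "C \<in> components n (skew_of K I)"
  shows "connected_abstract_skew_shape n (translate C (vneg (lexmin C)))"
  unfolding connected_abstract_skew_shape_def
  using component_skew_shape[OF assms] component_connected[OF assms(4)] by blast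

lemma connected_set_translate_abstract:
  assumes "connected_abstract_skew_shape n A" shows "connected_set n (translate A t)"
proof -
  obtain C where "connected_set n C" "A = translate C (vneg (lexmin C))"
    using assms unfolding connected_abstract_skew_shape_def by blast
  then show ?thesis using connected_set_translate[of n C] by (simp add: translate_translate)
qed

definition placed_in :: "nat \<Rightarrow> pt set \<Rightarrow> nat \<Rightarrow> (nat \<Rightarrow> pt set) \<Rightarrow> (nat \<Rightarrow> pt) \<Rightarrow> bool" where
  "placed_in n lam r nu b \<longleftrightarrow>
     (\<forall>i<r. \<forall>j<r. i \<noteq> j \<longrightarrow> translate (nu i) (b i) \<inter> translate (nu j) (b j) = {}) \<and>
     (\<forall>i<r. translate (nu i) (b i) \<subseteq> lam) \<and>
     (\<forall>i<r. \<forall>w\<in>Nn n. \<forall>v\<in>nu i. vadd (vadd v (b i)) w \<in> lam \<longrightarrow> vadd v w \<in> nu i)"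

lemma conds_abcd_iff_placed_in:
  "conds_abcd n lam mu r nu b c \<longleftrightarrow> placed_in n lam r nu b \<and> placed_in n mu r nu c"
  unfolding conds_abcd_def placed_in_def by (simp only: conj_assoc)

lemma components_enumeration:
  assumes "bij_betw C {..<r} S" and "\<And>i. i < r \<Longrightarrow> translate (nu i) (t i) = C i"
  shows "S = {translate (nu i) (t i) | i. i < r}"
proof -
  have "S = C ` {..<r}" using assms(1) unfolding bij_betw_def by simp
  also have "\<dots> = (\<lambda>i. translate (nu i) (t i)) ` {..<r}"
    by (rule image_cong) (simp_all add: assms(2))
  finally show ?thesis by blast
qed

lemma placed_in_components:
  assumes K: "monomial_ideal n K" and bij: "bij_betw C {..<r} (components n (skew_of K I))"
    and nu: "\<And>i. i < r \<Longrightarrow> translate (nu i) (t i) = C i"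
  shows "placed_in n (young_of n I) r nu t"
proof -
  have C: "C i \<in> components n (skew_of K I)" if "i < r" for i
    using bij that unfolding bij_betw_def by auto
  have "translate (nu i) (t i) \<inter> translate (nu j) (t j) = {}" if "i < r" "j < r" "i \<noteq> j" for i j
    using that components_disjoint[OF C C] bij nu unfolding bij_betw_def inj_on_def
    by (metis lessThan_iff)
  moreover have "translate (nu i) (t i) \<subseteq> young_of n I" if "i < r" for i
    using that nu components_subset[OF C] skew_of_subset_young_of[OF K] by blast
  moreover have "vadd v w \<in> nu i"
    if "i < r" "w \<in> Nn n" "v \<in> nu i" "vadd (vadd v (t i)) w \<in> young_of n I" for i w v
  proof -
    from that(3) have "vadd v (t i) \<in> C i" by (simp flip: nu[OF that(1)])
    then have "vadd (vadd v (t i)) w \<in> C i"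
      using component_upward_closed[OF K C[OF that(1)]] that(2,4) by blast
    then show ?thesis by (simp flip: nu[OF that(1)] add: vadd_right_commute)
  qed
  ultimately show ?thesis unfolding placed_in_def by blast
qed

section \<open>Monomial isomorphisms\<close>

lemma mon_eq_iff: "(mon a :: pt \<Rightarrow> 'k::field) = mon b \<longleftrightarrow> a = b"
  unfolding mon_def by (metis zero_neq_one)

lemma mon_neq_zero: "(mon a :: pt \<Rightarrow> 'k::field) \<noteq> (\<lambda>_. 0)"
  unfolding mon_def by (metis zero_neq_one)

lemma mon_in_qcarrier: "a \<in> E \<Longrightarrow> (mon a :: pt \<Rightarrow> 'k::field) \<in> qcarrier E"
  by (auto simp: qcarrier_def mon_def)

lemma mact_mon:
  "a \<in> E \<Longrightarrow> mact E w (mon a :: pt \<Rightarrow> 'k::field) =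
     (if vadd a w \<in> E then mon (vadd a w) else (\<lambda>_. 0))"
  unfolding mact_def mon_def by (auto simp: vsub_eq_iff)

lemma qcarrier_eq_sum_mon:
  assumes "finite E" "f \<in> qcarrier E" shows "f = (\<lambda>x. \<Sum>a\<in>E. f a * mon a x)"
proof
  fix x
  have "(\<Sum>a\<in>E. f a * mon a x) = (\<Sum>a\<in>E. if x = a then f a else 0)"
    by (rule sum.cong) (auto simp: mon_def)
  also have "\<dots> = f x" using assms by (auto simp: qcarrier_def)
  finally show "f x = (\<Sum>a\<in>E. f a * mon a x)" by simp
qed

locale monomial_iso =
  fixes n :: nat and E F :: "pt set" and phi :: "(pt \<Rightarrow> 'k::field) \<Rightarrow> pt \<Rightarrow> 'k"
  assumes finite_E: "finite E"
    and iso: "module_iso n E F phi"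
    and sends: "sends_monomials E F phi"
begin

definition sigma :: "pt \<Rightarrow> pt" where
  "sigma a = (SOME a'. a' \<in> F \<and> phi (mon a) = mon a')"

definition offset :: "pt \<Rightarrow> pt" where
  "offset a = vsub (sigma a) a"

lemma sigma_in: "a \<in> E \<Longrightarrow> sigma a \<in> F"
  and phi_mon: "a \<in> E \<Longrightarrow> phi (mon a) = mon (sigma a)"
  using someI_ex[of "\<lambda>a'. a' \<in> F \<and> phi (mon a) = mon a'"] sends
  unfolding sends_monomials_def sigma_def by blast+

lemma sigma_eq_vadd_offset: "sigma a = vadd a (offset a)"
  by (simp add: offset_def vadd_vsub_eq)

lemma phi_add: "f \<in> qcarrier E \<Longrightarrow> g \<in> qcarrier E \<Longrightarrow> phi (\<lambda>a. f a + g a) = (\<lambda>a. phi f a + phi g a)"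
  and phi_smult: "f \<in> qcarrier E \<Longrightarrow> phi (\<lambda>a. c * f a) = (\<lambda>a. c * phi f a)"
  and phi_mact: "w \<in> Nn n \<Longrightarrow> f \<in> qcarrier E \<Longrightarrow> phi (mact E w f) = mact F w (phi f)"
  and phi_bij: "bij_betw phi (qcarrier E) (qcarrier F)"
  using iso unfolding module_iso_def by blast+

lemma phi_zero: "phi (\<lambda>_. 0) = (\<lambda>_. 0)"
  using phi_smult[of "\<lambda>_. 0" 0] by (simp add: qcarrier_def)

lemma phi_sum_mon:
  "finite A \<Longrightarrow> A \<subseteq> E \<Longrightarrow>
     phi (\<lambda>x. \<Sum>a\<in>A. g a * mon a x) = (\<lambda>x. \<Sum>a\<in>A. g a * mon (sigma a) x)"
proof (induction A rule: finite_induct)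
  case empty
  then show ?case using phi_zero by simp
next
  case (insert a A)
  have a: "a \<in> E" using insert.prems by simp
  have "(\<lambda>x. g a * mon a x) \<in> qcarrier E" "(\<lambda>x. \<Sum>b\<in>A. g b * mon b x) \<in> qcarrier E"
    using insert.prems by (auto simp: qcarrier_def mon_def intro!: sum.neutral)
  then show ?case
    using insert phi_add phi_smult[OF mon_in_qcarrier[OF a]] phi_mon[OF a] by simp
qed

lemma sigma_inj: "inj_on sigma E"
proof (rule inj_onI)
  fix a b assume "a \<in> E" "b \<in> E" "sigma a = sigma b"
  then have "phi (mon a) = phi (mon b)" by (simp add: phi_mon)
  then have "(mon a :: pt \<Rightarrow> 'k) = mon b"
    using phi_bij mon_in_qcarrier \<open>a \<in> E\<close> \<open>b \<in> E\<close> unfolding bij_betw_def inj_on_def by metis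
  then show "a = b" by (simp add: mon_eq_iff)
qed

text \<open>Surjectivity needs finiteness of \<open>E\<close>: the preimage of \<open>mon y\<close> is a finite
  combination of monomials, whose image is supported on \<open>sigma ` E\<close>.\<close>
lemma sigma_image: "sigma ` E = F"
proof
  show "sigma ` E \<subseteq> F" using sigma_in by blast
  show "F \<subseteq> sigma ` E"
  proof
    fix y assume y: "y \<in> F"
    then obtain f where f: "f \<in> qcarrier E" "phi f = mon y"
      using phi_bij mon_in_qcarrier unfolding bij_betw_def by (metis imageE)
    have "mon y = phi f" using f(2) by simp
    also have "\<dots> = phi (\<lambda>x. \<Sum>a\<in>E. f a * mon a x)"
      by (rule arg_cong[OF qcarrier_eq_sum_mon[OF finite_E f(1)]])
    also have "\<dots> = (\<lambda>x. \<Sum>a\<in>E. f a * mon (sigma a) x)"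
      by (rule phi_sum_mon[OF finite_E order.refl])
    finally have "(\<Sum>a\<in>E. f a * mon (sigma a) y) = mon y y" by simp
    then have "(\<Sum>a\<in>E. f a * mon (sigma a) y) \<noteq> 0" by (simp add: mon_def)
    then obtain a where "a \<in> E" "f a * mon (sigma a) y \<noteq> 0"
      by (rule sum.not_neutral_contains_not_neutral)
    then show "y \<in> sigma ` E" by (auto simp: mon_def split: if_splits)
  qed
qed

lemma phi_mact_mon:
  assumes "a \<in> E" "w \<in> Nn n"
  shows "phi (if vadd a w \<in> E then mon (vadd a w) else (\<lambda>_. 0)) =
    (if vadd (sigma a) w \<in> F then mon (vadd (sigma a) w) else (\<lambda>_. 0))"
  using phi_mact[OF assms(2) mon_in_qcarrier[OF assms(1)]]
  by (simp add: mact_mon assms(1) sigma_in phi_mon)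

lemma vadd_sigma_mem_iff:
  assumes "a \<in> E" "w \<in> Nn n"
  shows "vadd (sigma a) w \<in> F \<longleftrightarrow> vadd a w \<in> E"
proof (cases "vadd a w \<in> E")
  case True
  then have "mon (sigma (vadd a w)) =
      (if vadd (sigma a) w \<in> F then mon (vadd (sigma a) w) else (\<lambda>_. 0::'k))"
    using phi_mact_mon[OF assms] phi_mon by simp
  then show ?thesis using True mon_neq_zero by (auto split: if_splits)
next
  case False
  then have "(\<lambda>_. 0::'k) = (if vadd (sigma a) w \<in> F then mon (vadd (sigma a) w) else (\<lambda>_. 0))"
    using phi_mact_mon[OF assms] phi_zero by simp
  then show ?thesis using False mon_neq_zero[THEN not_sym] by (auto split: if_splits)
qed

lemma sigma_vadd:
  assumes "a \<in> E" "w \<in> Nn n" "vadd a w \<in> E"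
  shows "sigma (vadd a w) = vadd (sigma a) w"
  using phi_mact_mon[OF assms(1,2)] phi_mon[OF assms(3)] assms vadd_sigma_mem_iff
  by (simp add: mon_eq_iff)

lemma offset_vadd:
  assumes "a \<in> E" "w \<in> Nn n" "vadd a w \<in> E"
  shows "offset (vadd a w) = offset a"
  unfolding offset_def sigma_vadd[OF assms] by (simp add: vsub_vadd_vadd)

lemma link_rel_sigma_iff:
  assumes a: "a \<in> E" and b: "b \<in> E"
  shows "(sigma a, sigma b) \<in> link_rel n F \<longleftrightarrow> (a, b) \<in> link_rel n E"
proof
  assume "(sigma a, sigma b) \<in> link_rel n F"
  then obtain a' b' where h: "a' \<in> Nn n" "b' \<in> Nn n"
      "vadd (sigma a) a' = vadd (sigma b) b'" "vadd (sigma a) a' \<in> F"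
    unfolding link_rel_def linked_def by blast
  have "vadd a a' \<in> E" "vadd b b' \<in> E"
    using vadd_sigma_mem_iff[OF a h(1)] vadd_sigma_mem_iff[OF b h(2)] h(3,4) by auto
  moreover have "vadd a a' = vadd b b'"
    using sigma_inj h(3) sigma_vadd a b h(1,2) calculation unfolding inj_on_def by metis
  ultimately show "(a, b) \<in> link_rel n E" using a b h(1,2) unfolding link_rel_def linked_def by blast
next
  assume "(a, b) \<in> link_rel n E"
  then obtain a' b' where h: "a' \<in> Nn n" "b' \<in> Nn n" "vadd a a' = vadd b b'" "vadd a a' \<in> E"
    unfolding link_rel_def linked_def by blast
  have "vadd (sigma a) a' = vadd (sigma b) b'" "vadd (sigma a) a' \<in> F"
    using sigma_vadd vadd_sigma_mem_iff a b h by metis+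
  then show "(sigma a, sigma b) \<in> link_rel n F"
    using sigma_in a b h(1,2) unfolding link_rel_def linked_def by blast
qed

lemma offset_link_rel:
  assumes "(a, b) \<in> link_rel n E" shows "offset a = offset b"
proof -
  obtain a' b' where h: "a \<in> E" "b \<in> E" "a' \<in> Nn n" "b' \<in> Nn n"
      "vadd a a' = vadd b b'" "vadd a a' \<in> E"
    using assms unfolding link_rel_def linked_def by blast
  have "offset (vadd a a') = offset a" by (rule offset_vadd[OF h(1,3,6)])
  moreover have "offset (vadd b b') = offset b" using offset_vadd[OF h(2,4)] h(5,6) by simp
  ultimately show ?thesis using h(5) by simp
qed

lemma rtrancl_link_rel_sigma:
  "(a, b) \<in> (link_rel n E)\<^sup>* \<Longrightarrow> (sigma a, sigma b) \<in> (link_rel n F)\<^sup>* \<and> offset b = offset a"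
proof (induction rule: rtrancl_induct)
  case (step b c)
  have "b \<in> E" "c \<in> E" using step.hyps(2) link_rel_subset by blast+
  then show ?case
    using step link_rel_sigma_iff offset_link_rel by (metis rtrancl.rtrancl_into_rtrancl)
qed simp

lemma rtrancl_link_rel_sigma_preimage:
  "(sigma a, y) \<in> (link_rel n F)\<^sup>* \<Longrightarrow> a \<in> E \<Longrightarrow> \<exists>b\<in>E. y = sigma b \<and> (a, b) \<in> (link_rel n E)\<^sup>*"
proof (induction rule: rtrancl_induct)
  case (step y z)
  then obtain b where b: "b \<in> E" "y = sigma b" "(a, b) \<in> (link_rel n E)\<^sup>*" by blast
  obtain c where c: "c \<in> E" "z = sigma c"
    using step.hyps(2) link_rel_subset sigma_image by blast
  have "(b, c) \<in> link_rel n E" using link_rel_sigma_iff b c step.hyps(2) by blast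
  then show ?case using b c by (blast intro: rtrancl_into_rtrancl)
qed blast

lemma offset_component: "C \<in> components n E \<Longrightarrow> a \<in> C \<Longrightarrow> x \<in> C \<Longrightarrow> offset x = offset a"
  using component_eq_class rtrancl_link_rel_sigma by blast

lemma sigma_class:
  assumes "a \<in> E"
  shows "(link_rel n F)\<^sup>* `` {sigma a} = sigma ` ((link_rel n E)\<^sup>* `` {a})"
  using rtrancl_link_rel_sigma rtrancl_link_rel_sigma_preimage[OF _ assms] by blast

lemma components_sigma: "components n F = (\<lambda>C. sigma ` C) ` components n E"
proof -
  have "components n F = (\<lambda>a. (link_rel n F)\<^sup>* `` {a}) ` sigma ` E"
    unfolding components_def sigma_image by blast
  also have "\<dots> = (\<lambda>a. sigma ` ((link_rel n E)\<^sup>* `` {a})) ` E"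
    unfolding image_image using sigma_class by (rule image_cong[OF refl])
  also have "\<dots> = (\<lambda>C. sigma ` C) ` components n E"
    unfolding components_def by blast
  finally show ?thesis .
qed

lemma bij_betw_image_components: "bij_betw (\<lambda>C. sigma ` C) (components n E) (components n F)"
  unfolding bij_betw_def components_sigma
  using inj_on_image_eq_iff[OF sigma_inj] components_subset by (auto intro!: inj_onI)

lemma sigma_image_component:
  assumes "C \<in> components n E" "a \<in> C" shows "sigma ` C = translate C (offset a)"
  unfolding translate_def using offset_component[OF assms] sigma_eq_vadd_offset by auto

lemma translate_component_sigma:
  assumes "C \<in> components n E" "a \<in> C"
  shows "translate (translate C (vneg a)) (sigma a) = sigma ` C"
  unfolding translate_translate vneg_vadd sigma_image_component[OF assms] offset_def ..

lemma phi_mon_component: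
  assumes C: "C \<in> components n E" and a: "a \<in> C" and v: "v \<in> translate C (vneg a)"
  shows "phi (mon (vadd v a)) = mon (vadd v (sigma a))"
proof -
  have x: "vadd v a \<in> C" using vadd_mem_translate_iff[of v a "translate C (vneg a)"] v by simp
  then have "sigma (vadd v a) = vadd (vadd v a) (offset a)"
    using offset_component[OF C a] sigma_eq_vadd_offset by metis
  also have "\<dots> = vadd v (sigma a)" by (simp add: offset_def vadd_def vsub_def)
  finally show ?thesis using phi_mon x components_subset[OF C] by auto
qed

end

lemma monomial_iso_decomposition:
  fixes phi :: "(pt \<Rightarrow> 'k::field) \<Rightarrow> pt \<Rightarrow> 'k"
  assumes I: "monomial_ideal n I" and K: "monomial_ideal n K" and L: "monomial_ideal n L"
    and fin: "finite (young_of n I)"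
    and iso: "module_iso n (skew_of K I) (skew_of L J) phi"
    and sends: "sends_monomials (skew_of K I) (skew_of L J) phi"
  shows "\<exists>r nu b c.
    (\<forall>i<r. connected_abstract_skew_shape n (nu i) \<and> b i \<in> Zn n \<and> c i \<in> Zn n) \<and>
    components n (skew_of K I) = {translate (nu i) (b i) | i. i < r} \<and>
    components n (skew_of L J) = {translate (nu i) (c i) | i. i < r} \<and>
    (\<forall>i<r. \<forall>v\<in>nu i. phi (mon (vadd v (b i))) = mon (vadd v (c i))) \<and>
    conds_abcd n (young_of n I) (young_of n J) r nu b c"
proof -
  let ?E = "skew_of K I" and ?F = "skew_of L J"
  have finite_E: "finite ?E" using fin skew_of_subset_young_of[OF K] by (rule finite_subset[rotated])
  interpret monomial_iso n ?E ?F phi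
    using finite_E iso sends by unfold_locales
  define r where "r = card (components n ?E)"
  obtain h where h: "bij_betw h {..<r} (components n ?E)"
    using ex_bij_betw_nat_finite[OF finite_components[OF finite_E]]
    unfolding r_def atLeast0LessThan by blast
  define b where "b i = lexmin (h i)" for i
  define nu where "nu i = translate (h i) (vneg (b i))" for i
  define c where "c i = sigma (b i)" for i
  have hC: "h i \<in> components n ?E" if "i < r" for i
    using h that unfolding bij_betw_def by auto
  have hE: "h i \<subseteq> ?E" if "i < r" for i
    using components_subset[OF hC[OF that]] .
  have b_in: "b i \<in> h i" if "i < r" for i
    unfolding b_def using lexmin_component[OF finite_E hC[OF that]] .
  have at_b: "translate (nu i) (b i) = h i" for i
    unfolding nu_def by simp
  have at_c: "translate (nu i) (c i) = sigma ` h i" if "i < r" for i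
    unfolding nu_def c_def using translate_component_sigma[OF hC[OF that] b_in[OF that]] .
  have h_F: "bij_betw (\<lambda>i. sigma ` h i) {..<r} (components n ?F)"
    using bij_betw_trans[OF h bij_betw_image_components] by (simp add: comp_def)
  have shape: "connected_abstract_skew_shape n (nu i) \<and> b i \<in> Zn n \<and> c i \<in> Zn n"
    if "i < r" for i
    using component_abstract_skew_shape[OF I K fin hC[OF that]] b_in[OF that] hE[OF that]
      sigma_in skew_of_subset_Nn[OF K] skew_of_subset_Nn[OF L] Nn_subset_Zn
    unfolding nu_def b_def c_def by blast
  have phi_at: "phi (mon (vadd v (b i))) = mon (vadd v (c i))" if "i < r" "v \<in> nu i" for i v
    using phi_mon_component[OF hC b_in] that unfolding nu_def c_def by blast
  have comp_E: "components n ?E = {translate (nu i) (b i) | i. i < r}"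
    using components_enumeration[OF h at_b] .
  have comp_F: "components n ?F = {translate (nu i) (c i) | i. i < r}"
    using components_enumeration[OF h_F at_c] .
  have placed_b: "placed_in n (young_of n I) r nu b"
    using placed_in_components[OF K h at_b] .
  have placed_c: "placed_in n (young_of n J) r nu c"
    using placed_in_components[OF L h_F at_c] .
  show ?thesis unfolding conds_abcd_iff_placed_in
    by (rule exI[of _ r], rule exI[of _ nu], rule exI[of _ b], rule exI[of _ c], intro conjI)
      (simp_all add: shape comp_E comp_F phi_at placed_b placed_c)
qed

section \<open>Realising a placement\<close>

lemma monomial_ideal_compl: "young n lam \<Longrightarrow> monomial_ideal n (Nn n - lam)"
  unfolding monomial_ideal_def young_def using vadd_in_Nn vle_vadd by blast

lemma young_of_compl: "young n lam \<Longrightarrow> young_of n (Nn n - lam) = lam"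
  unfolding young_of_def young_def by blast

locale placement =
  fixes n :: nat and lam :: "pt set" and r :: nat and nu :: "nat \<Rightarrow> pt set" and b :: "nat \<Rightarrow> pt"
  assumes young: "young n lam"
    and connected: "\<And>i. i < r \<Longrightarrow> connected_abstract_skew_shape n (nu i)"
    and placed: "placed_in n lam r nu b"
begin

abbreviation piece :: "nat \<Rightarrow> pt set" where
  "piece i \<equiv> translate (nu i) (b i)"

definition support :: "pt set" where
  "support = (\<Union>i<r. piece i)"

lemma piece_subset: "i < r \<Longrightarrow> piece i \<subseteq> lam"
  using placed unfolding placed_in_def by blast

lemma piece_eqI: "i < r \<Longrightarrow> j < r \<Longrightarrow> x \<in> piece i \<Longrightarrow> x \<in> piece j \<Longrightarrow> i = j"
  using placed unfolding placed_in_def by blast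

lemma piece_upward_closed:
  assumes i: "i < r" and x: "x \<in> piece i" and w: "w \<in> Nn n" and xw: "vadd x w \<in> lam"
  shows "vadd x w \<in> piece i"
proof -
  have "vsub x (b i) \<in> nu i" using x by (simp add: mem_translate)
  moreover have "vadd (vadd (vsub x (b i)) (b i)) w \<in> lam" using xw by simp
  ultimately have "vadd (vsub x (b i)) w \<in> nu i"
    using placed i w unfolding placed_in_def by blast
  then show ?thesis by (simp add: mem_translate vsub_vadd_commute)
qed

lemma support_subset: "support \<subseteq> lam"
  unfolding support_def using piece_subset by blast

lemma mem_support_iff: "x \<in> support \<longleftrightarrow> (\<exists>i<r. \<exists>v\<in>nu i. x = vadd v (b i))"
  unfolding support_def translate_def by blast

lemma vadd_mem_support: "i < r \<Longrightarrow> v \<in> nu i \<Longrightarrow> vadd v (b i) \<in> support"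
  unfolding support_def by (rule UN_I[of i]) simp_all

lemma monomial_ideal_support: "monomial_ideal n ((Nn n - lam) \<union> support)"
  unfolding monomial_ideal_def
proof (intro conjI ballI)
  show "(Nn n - lam) \<union> support \<subseteq> Nn n" using support_subset young unfolding young_def by blast
  fix a w assume a: "a \<in> (Nn n - lam) \<union> support" and w: "w \<in> Nn n"
  then have "vadd a w \<in> Nn n" using vadd_in_Nn support_subset young unfolding young_def by blast
  moreover have "vadd a w \<in> support" if "a \<in> support" "vadd a w \<in> lam"
    using that piece_upward_closed w unfolding support_def by blast
  moreover have "vadd a w \<notin> lam" if "a \<notin> lam"
  proof
    assume "vadd a w \<in> lam"
    moreover have "a \<in> Nn n" using a that support_subset by blast
    ultimately have "a \<in> lam" using young vle_vadd[OF w] unfolding young_def by blast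
    then show False using that by contradiction
  qed
  ultimately show "vadd a w \<in> (Nn n - lam) \<union> support" using a support_subset by blast
qed

lemma skew_of_support: "skew_of ((Nn n - lam) \<union> support) (Nn n - lam) = support"
  unfolding skew_of_def using support_subset by blast

text \<open>A common upper bound of two points of the support lies in \<open>lam\<close>, hence by upward closure
  in the pieces of both points; the pieces being disjoint, links never leave a piece.\<close>
lemma link_rel_support_piece:
  assumes i: "i < r" and p: "p \<in> piece i" and pq: "(p, q) \<in> link_rel n support"
  shows "q \<in> piece i"
proof -
  obtain a' b' where h: "a' \<in> Nn n" "b' \<in> Nn n" "vadd p a' = vadd q b'" "vadd p a' \<in> support"
    using pq unfolding link_rel_def linked_def by blast
  obtain j where j: "j < r" "q \<in> piece j"
    using pq link_rel_subset unfolding support_def by blast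
  have "vadd p a' \<in> lam" using h(4) support_subset by blast
  then have "vadd p a' \<in> piece i" "vadd p a' \<in> piece j"
    using piece_upward_closed[OF i p h(1)] piece_upward_closed[OF j h(2)] h(3) by simp_all
  then show ?thesis using piece_eqI[OF i j(1)] j by blast
qed

lemma components_support: "components n support = {piece i | i. i < r}"
  by (rule components_of_separated_union[OF support_def])
    (use connected connected_set_translate_abstract link_rel_support_piece in blast)+

definition piece_index :: "pt \<Rightarrow> nat" where
  "piece_index x = (SOME i. i < r \<and> x \<in> piece i)"

lemma piece_index_eq: "i < r \<Longrightarrow> x \<in> piece i \<Longrightarrow> piece_index x = i"
  unfolding piece_index_def by (rule some_equality) (use piece_eqI in blast)+

lemma vsub_mem_support_iff:
  assumes i: "i < r" and v: "v \<in> nu i" and w: "w \<in> Nn n"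
  shows "vsub (vadd v (b i)) w \<in> support \<longleftrightarrow> vsub v w \<in> nu i"
proof
  assume "vsub (vadd v (b i)) w \<in> support"
  then obtain j where j: "j < r" "vsub (vadd v (b i)) w \<in> piece j" unfolding support_def by blast
  have "vadd v (b i) \<in> lam" using piece_subset[OF i] v by auto
  then have "vadd v (b i) \<in> piece j" using piece_upward_closed[OF j w] by simp
  then have "j = i" using piece_eqI[OF i j(1), of "vadd v (b i)"] v by simp
  then show "vsub v w \<in> nu i" using j(2) by (simp add: vsub_vadd_commute)
next
  assume "vsub v w \<in> nu i"
  then show "vsub (vadd v (b i)) w \<in> support"
    using vadd_mem_support[OF i] by (simp add: vsub_vadd_commute)
qed

end

locale placement_pair = S1: placement n lam r nu b + S2: placement n mu r nu c
  for n lam mu r nu b c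
begin

definition relabel :: "pt \<Rightarrow> pt" where
  "relabel x = vadd (vsub x (b (S1.piece_index x))) (c (S1.piece_index x))"

definition unrelabel :: "pt \<Rightarrow> pt" where
  "unrelabel y = vadd (vsub y (c (S2.piece_index y))) (b (S2.piece_index y))"

definition transfer :: "(pt \<Rightarrow> 'k::field) \<Rightarrow> pt \<Rightarrow> 'k" where
  "transfer f = (\<lambda>y. if y \<in> S2.support then f (unrelabel y) else 0)"

definition untransfer :: "(pt \<Rightarrow> 'k::field) \<Rightarrow> pt \<Rightarrow> 'k" where
  "untransfer g = (\<lambda>x. if x \<in> S1.support then g (relabel x) else 0)"

lemma relabel_piece: "i < r \<Longrightarrow> v \<in> nu i \<Longrightarrow> relabel (vadd v (b i)) = vadd v (c i)"
  unfolding relabel_def by (simp add: S1.piece_index_eq)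

lemma unrelabel_piece: "i < r \<Longrightarrow> v \<in> nu i \<Longrightarrow> unrelabel (vadd v (c i)) = vadd v (b i)"
  unfolding unrelabel_def by (simp add: S2.piece_index_eq)

lemma relabel_support:
  assumes "x \<in> S1.support" shows "relabel x \<in> S2.support \<and> unrelabel (relabel x) = x"
proof -
  obtain i v where "i < r" "v \<in> nu i" "x = vadd v (b i)"
    using assms S1.mem_support_iff by blast
  then show ?thesis by (simp add: relabel_piece unrelabel_piece S2.vadd_mem_support)
qed

lemma unrelabel_support:
  assumes "y \<in> S2.support" shows "unrelabel y \<in> S1.support \<and> relabel (unrelabel y) = y"
proof -
  obtain i v where "i < r" "v \<in> nu i" "y = vadd v (c i)"
    using assms S2.mem_support_iff by blast
  then show ?thesis by (simp add: relabel_piece unrelabel_piece S1.vadd_mem_support)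
qed

lemma transfer_bij: "bij_betw (transfer :: (pt \<Rightarrow> 'k::field) \<Rightarrow> _) (qcarrier S1.support) (qcarrier S2.support)"
proof (rule bij_betw_byWitness[where f' = untransfer])
  show "\<forall>f\<in>qcarrier S1.support. untransfer (transfer f) = (f :: pt \<Rightarrow> 'k)"
    using relabel_support by (auto intro!: ext simp: transfer_def untransfer_def qcarrier_def)
  show "\<forall>g\<in>qcarrier S2.support. transfer (untransfer g) = (g :: pt \<Rightarrow> 'k)"
    using unrelabel_support by (auto intro!: ext simp: transfer_def untransfer_def qcarrier_def)
  show "transfer ` qcarrier S1.support \<subseteq> qcarrier S2.support"
    "untransfer ` qcarrier S2.support \<subseteq> qcarrier S1.support"
    by (auto simp: transfer_def untransfer_def qcarrier_def)
qed

lemma transfer_mact: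
  assumes w: "w \<in> Nn n"
  shows "transfer (mact S1.support w f) = mact S2.support w (transfer (f :: pt \<Rightarrow> 'k::field))"
proof
  fix y
  show "transfer (mact S1.support w f) y = mact S2.support w (transfer f) y"
  proof (cases "y \<in> S2.support")
    case True
    then obtain i v where iv: "i < r" "v \<in> nu i" "y = vadd v (c i)"
      using S2.mem_support_iff by blast
    have "unrelabel (vsub y w) = vsub (vadd v (b i)) w" if "vsub v w \<in> nu i"
      using unrelabel_piece[OF iv(1) that] iv(3) by (simp add: vsub_vadd_commute)
    then show ?thesis
      using True iv unrelabel_piece S1.vsub_mem_support_iff[OF iv(1,2) w]
        S2.vsub_mem_support_iff[OF iv(1,2) w] S1.mem_support_iff
      by (auto simp: transfer_def mact_def)
  qed (simp add: transfer_def mact_def)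
qed

lemma transfer_mon:
  assumes "x \<in> S1.support" shows "transfer (mon x) = (mon (relabel x) :: pt \<Rightarrow> 'k::field)"
proof
  fix y
  have "y \<in> S2.support \<Longrightarrow> unrelabel y = x \<longleftrightarrow> y = relabel x"
    using relabel_support[OF assms] unrelabel_support by metis
  then show "transfer (mon x) y = (mon (relabel x) y :: 'k)"
    using relabel_support[OF assms] by (auto simp: transfer_def mon_def)
qed

lemma module_iso_transfer: "module_iso n S1.support S2.support (transfer :: (pt \<Rightarrow> 'k::field) \<Rightarrow> _)"
  unfolding module_iso_def
  by (intro conjI ballI allI transfer_bij transfer_mact) (auto intro!: ext simp: transfer_def)

lemma sends_monomials_transfer: "sends_monomials S1.support S2.support (transfer :: (pt \<Rightarrow> 'k::field) \<Rightarrow> _)"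
  unfolding sends_monomials_def using transfer_mon relabel_support by blast

end

lemma placement_realisation:
  assumes "young n lam" "young n mu"
    and "\<And>i. i < r \<Longrightarrow> connected_abstract_skew_shape n (nu i)"
    and "conds_abcd n lam mu r nu b c"
  shows "\<exists>K I L J (phi :: (pt \<Rightarrow> 'k::field) \<Rightarrow> (pt \<Rightarrow> 'k)).
    monomial_ideal n I \<and> monomial_ideal n K \<and> I \<subseteq> K \<and>
    monomial_ideal n J \<and> monomial_ideal n L \<and> J \<subseteq> L \<and>
    finite (young_of n I) \<and> finite (young_of n J) \<and>
    module_iso n (skew_of K I) (skew_of L J) phi \<and>
    sends_monomials (skew_of K I) (skew_of L J) phi \<and>
    young_of n I = lam \<and> young_of n J = mu \<and>
    components n (skew_of K I) = {translate (nu i) (b i) | i. i < r} \<and>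
    components n (skew_of L J) = {translate (nu i) (c i) | i. i < r} \<and>
    (\<forall>i<r. \<forall>v\<in>nu i. phi (mon (vadd v (b i))) = mon (vadd v (c i)))"
proof -
  interpret placement_pair n lam mu r nu b c
    using assms unfolding conds_abcd_iff_placed_in by unfold_locales auto
  have fin: "finite lam" "finite mu" using assms(1,2) unfolding young_def by blast+
  have phi_at: "transfer (mon (vadd v (b i))) = (mon (vadd v (c i)) :: pt \<Rightarrow> 'k)"
    if "i < r" "v \<in> nu i" for i v
    using that transfer_mon relabel_piece S1.mem_support_iff by metis
  show ?thesis
    by (rule exI[of _ "(Nn n - lam) \<union> S1.support"], rule exI[of _ "Nn n - lam"],
        rule exI[of _ "(Nn n - mu) \<union> S2.support"], rule exI[of _ "Nn n - mu"],
        rule exI[of _ transfer], intro conjI)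
      (simp_all add: assms(1,2) fin monomial_ideal_compl young_of_compl
        S1.monomial_ideal_support S2.monomial_ideal_support module_iso_transfer
        sends_monomials_transfer S1.components_support S2.components_support phi_at
        Un_upper1 S1.skew_of_support S2.skew_of_support)
qed

theorem corollary2p1:
  fixes n :: nat
  shows
  "(\<forall>K I L J (phi :: (pt \<Rightarrow> 'k::field) \<Rightarrow> (pt \<Rightarrow> 'k)).
      monomial_ideal n I \<and> monomial_ideal n K \<and> I \<subseteq> K \<and>
      monomial_ideal n J \<and> monomial_ideal n L \<and> J \<subseteq> L \<and>
      finite (young_of n I) \<and> finite (young_of n J) \<and>
      module_iso n (skew_of K I) (skew_of L J) phi \<and>
      sends_monomials (skew_of K I) (skew_of L J) phi \<longrightarrow>
      (\<exists>r nu b c.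
         (\<forall>i<r. connected_abstract_skew_shape n (nu i) \<and> b i \<in> Zn n \<and> c i \<in> Zn n) \<and>
         components n (skew_of K I) = {translate (nu i) (b i) | i. i < r} \<and>
         components n (skew_of L J) = {translate (nu i) (c i) | i. i < r} \<and>
         (\<forall>i<r. \<forall>v\<in>nu i. phi (mon (vadd v (b i))) = mon (vadd v (c i))) \<and>
         conds_abcd n (young_of n I) (young_of n J) r nu b c))
   \<and>
   (\<forall>lam mu r nu b c.
      young n lam \<and> young n mu \<and>
      (\<forall>i<r. connected_abstract_skew_shape n (nu i) \<and> b i \<in> Zn n \<and> c i \<in> Zn n) \<and>
      conds_abcd n lam mu r nu b c \<longrightarrow>
      (\<exists>K I L J (phi :: (pt \<Rightarrow> 'k) \<Rightarrow> (pt \<Rightarrow> 'k)).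
         monomial_ideal n I \<and> monomial_ideal n K \<and> I \<subseteq> K \<and>
         monomial_ideal n J \<and> monomial_ideal n L \<and> J \<subseteq> L \<and>
         finite (young_of n I) \<and> finite (young_of n J) \<and>
         module_iso n (skew_of K I) (skew_of L J) phi \<and>
         sends_monomials (skew_of K I) (skew_of L J) phi \<and>
         young_of n I = lam \<and> young_of n J = mu \<and>
         components n (skew_of K I) = {translate (nu i) (b i) | i. i < r} \<and>
         components n (skew_of L J) = {translate (nu i) (c i) | i. i < r} \<and>
         (\<forall>i<r. \<forall>v\<in>nu i. phi (mon (vadd v (b i))) = mon (vadd v (c i)))))"
  by (intro conjI allI impI; elim conjE)
    (rule monomial_iso_decomposition placement_realisation; blast)+

end
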